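(* Let $c\in\mathbb{F}$ and let $V=V_{\mathrm{Vir}}(c,0)=\bigoplus_{n\ge0}V_n$ be the Virasoro vertex algebra with its grading and $\mathcal{H}$-action (described in the context). Then $L_1^{(n)}V_n=0$ for all $n\ge1$.
   Context: $\mathbb{F}$ is an algebraically closed field of odd prime characteristic $p$. $\mathcal{H}$: let $\mathfrak{sl}_2$ over $\mathbb{C}$ have basis $L_{-1},L_0,L_1$ with $[L_1,L_{-1}]=2L_0$, $[L_0,L_{\pm1}]=\mp L_{\pm1}$; put $L_{\pm1}^{(n)}=L_{\pm1}^n/n!$, $L_0^{(n)}=\binom{-2L_0}{n}$ in $U(\mathfrak{sl}_2)$; $U(\mathfrak{sl}_2)_{\mathbb{Z}}$ is the $\mathbb{Z}$-span of the $L_{-1}^{(i)}L_0^{(j)}L_1^{(k)}$, and $\mathcal{H}=\mathbb{F}\otimes_{\mathbb{Z}}U(\mathfrak{sl}_2)_{\mathbb{Z}}$ (Hopf algebra with $\Delta(L_{\pm1}^{(n)})=\sum_iL_{\pm1}^{(n-i)}\otimes L_{\pm1}^{(i)}$, $\Delta(L_0^{(n)})=\sum_iL_0^{(n-i)}\otimes L_0^{(i)}$, $\varepsilon=\delta_{n,0}$). Virasoro setting: $\mathrm{Vir}$ over $\mathbb{F}$ has basis $\{L_n\}_{n\in\mathbb{Z}}\cup\{\mathbf{c}\}$ with $[L_m,L_n]=(m-n)L_{m+n}+\frac12\binom{m+1}{3}\delta_{m+n,0}\mathbf{c}$, $\mathbf{c}$ central. It is an $\mathcal{H}$-module Lie algebra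 via $L_{\pm1}^{(r)}\mathbf{c}=L_0^{(r)}\mathbf{c}=\delta_{r,0}\mathbf{c}$, $L_{-1}^{(r)}(L_n)=(-1)^r\binom{n+1}{r}L_{n-r}$, $L_1^{(r)}(L_n)=\binom{-n+1}{r}L_{n+r}$, $L_0^{(r)}(L_n)=\binom{2n}{r}L_n$, extended to make $U(\mathrm{Vir})$ an $\mathcal{H}$-module algebra ($b(xy)=\sum(b^{(1)}x)(b^{(2)}y)$, where $\Delta(b)=\sum b^{(1)}\otimes b^{(2)}$). $V_{\mathrm{Vir}}(c,0)=U(\mathrm{Vir})/J_c$, where $J_c$ is the left ideal generated by $\mathbf{c}-c$ and $L_n$ ($n\ge-1$); $J_c$ is an $\mathcal{H}$-submodule, giving the $\mathcal{H}$-action on $V_{\mathrm{Vir}}(c,0)$. The grading is $\deg\mathbf{1}=0$, $\deg L_n=-n$, so $V_n$ is spanned by $L_{-s_1}\cdots L_{-s_r}\mathbf{1}$ with $s_i\ge2$, $\sum s_i=n$, where $\mathbf{1}=1+J_c$. *)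

theory Defs
  imports "HOL-Computational_Algebra.Polynomial"
begin

datatype vgen = L int | C

text \<open>Elements of the tensor algebra T(Vir) over a field: functions from words in the
  generators to coefficients (finite support is required where relevant).\<close>
type_synonym 'a tens = "vgen list \<Rightarrow> 'a"

definition ibinom :: "int \<Rightarrow> nat \<Rightarrow> int" where
  "ibinom a r = (if 0 \<le> a then int (nat a choose r)
                 else (-1) ^ r * int ((nat (- a) + r - 1) choose r))"

definition mon :: "vgen list \<Rightarrow> 'a::zero_neq_one tens" where
  "mon w = (\<lambda>u. if u = w then 1 else 0)"

definition tmul :: "'a::semiring_0 tens \<Rightarrow> 'a tens \<Rightarrow> 'a tens" where
  "tmul x y = (\<lambda>w. \<Sum>k\<le>length w. x (take k w) * y (drop k w))"

definition tsmult :: "'a::times \<Rightarrow> 'a tens \<Rightarrow> 'a tens" where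
  "tsmult a x = (\<lambda>w. a * x w)"

fun vbr :: "vgen \<Rightarrow> vgen \<Rightarrow> 'a::field tens" where
  "vbr (L m) (L n) = (\<lambda>w. of_int (m - n) * mon [L (m + n)] w
       + (if m + n = 0 then (1/2) * of_int (ibinom (m + 1) 3) * mon [C] w else 0))"
| "vbr _ _ = (\<lambda>w. 0)"

text \<open>The kernel of T(Vir) \<rightarrow> V_Vir(c,0) = U(Vir)/J_c: the span of the two-sided ideal
  defining U(Vir) together with the (preimage of the) left ideal J_c.\<close>
inductive_set vacK :: "'a::field \<Rightarrow> 'a tens set" for c :: "'a" where
  zero: "(\<lambda>w. 0) \<in> vacK c"
| add: "x \<in> vacK c \<Longrightarrow> y \<in> vacK c \<Longrightarrow> (\<lambda>w. x w + y w) \<in> vacK c"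
| smult: "x \<in> vacK c \<Longrightarrow> tsmult a x \<in> vacK c"
| comm: "tmul (mon u) (tmul (\<lambda>w. mon [g, h] w - mon [h, g] w - vbr g h w) (mon v)) \<in> vacK c"
| central: "tmul (mon u) (\<lambda>w. mon [C] w - c * mon [] w) \<in> vacK c"
| annih: "n \<ge> -1 \<Longrightarrow> mon (u @ [L n]) \<in> vacK c"

fun gdeg :: "vgen \<Rightarrow> int" where
  "gdeg (L n) = - n"
| "gdeg C = 0"

definition wdeg :: "vgen list \<Rightarrow> int" where
  "wdeg w = sum_list (map gdeg w)"

text \<open>Tensors representing elements of V_n: finite support, homogeneous of degree n.\<close>
definition homog :: "int \<Rightarrow> 'a::zero tens \<Rightarrow> bool" where
  "homog n x \<longleftrightarrow> finite {w. x w \<noteq> 0} \<and> (\<forall>w. x w \<noteq> 0 \<longrightarrow> wdeg w = n)"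

fun act1g :: "nat \<Rightarrow> vgen \<Rightarrow> 'a::field tens" where
  "act1g r (L m) = tsmult (of_int (ibinom (1 - m) r)) (mon [L (m + int r)])"
| "act1g r C = (if r = 0 then mon [C] else (\<lambda>w. 0))"

text \<open>Extension to words via the coproduct Delta(L_1^{(r)}) = sum_i L_1^{(r-i)} \<otimes> L_1^{(i)}
  (module-algebra property), with L_1^{(r)} 1 = delta_{r,0} 1.\<close>
fun act1w :: "nat \<Rightarrow> vgen list \<Rightarrow> 'a::field tens" where
  "act1w r [] = (if r = 0 then mon [] else (\<lambda>w. 0))"
| "act1w r (g # ws) = (\<lambda>w. \<Sum>i\<le>r. tmul (act1g i g) (act1w (r - i) ws) w)"

definition act1 :: "nat \<Rightarrow> 'a::field tens \<Rightarrow> 'a tens" where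
  "act1 r x = (\<lambda>w. \<Sum>u\<in>{u. x u \<noteq> 0}. x u * act1w r u w)"

definition alg_closed_type :: "'a::field itself \<Rightarrow> bool" where
  "alg_closed_type _ \<longleftrightarrow> (\<forall>q :: 'a poly. degree q \<noteq> 0 \<longrightarrow> (\<exists>z. poly q z = 0))"

end

theory Submission
  imports Defs
begin

text \<open>First, the kernel of \<open>T(Vir) \<rightarrow> V\<close> is stable under every \<open>L\<^sub>1\<^sup>(\<^sup>r\<^sup>)\<close>: the action
  preserves the commutation relations (a binomial convolution identity), the relation
  \<open>c = c\<cdot>1\<close>, and the annihilation by \<open>L\<^sub>n\<close>, \<open>n \<ge> -1\<close>. Secondly, modulo the kernel every
  word of degree \<open>n\<close> is a combination of words of degree \<open>n\<close> in the generators \<open>L\<^sub>k\<close>,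
  \<open>k \<le> 1\<close>: move the rightmost other letter to the end, where it is either annihilated or
  the central charge; the commutators produced on the way are shorter words.
  On such a word \<open>L\<^sub>1\<^sup>(\<^sup>n\<^sup>)\<close> produces words in the same generators of degree 0, because
  \<open>binom(1-k, i) = 0\<close> whenever \<open>k \<le> 1 < k + i\<close>. Finally, a nonempty such word of degree at
  most 1 lies in the kernel: it ends in an annihilator, or else it contains \<open>L\<^sub>1\<close>, which
  can be moved to the end.\<close>

lemma take_drop_eq_iff:
  assumes "k \<le> length w"
  shows "(take k w = u \<and> drop k w = v) \<longleftrightarrow> (k = length u \<and> w = u @ v)"
  using assms by (metis append_eq_conv_conj append_take_drop_id length_take min_absorb2)

lemma tmul_mon_mon: "tmul (mon u) (mon v) = (mon (u @ v) :: 'a::field tens)"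
proof
  fix w :: "vgen list"
  have "tmul (mon u) (mon v) w = (\<Sum>k\<le>length w. (if k = length u \<and> w = u @ v then 1 else 0::'a))"
    unfolding tmul_def mon_def
    by (rule sum.cong) (simp_all add: take_drop_eq_iff[symmetric])
  also have "\<dots> = mon (u @ v) w"
    by (auto simp: mon_def)
  finally show "tmul (mon u) (mon v) w = (mon (u @ v) w :: 'a)" .
qed

lemma sum_triangle_Sigma:
  "(\<Sum>j\<le>n. \<Sum>l\<le>n - j. G j l) = (\<Sum>(j,l)\<in>{(j,l). j + l \<le> (n::nat)}. G j l)"
proof -
  have "{(j,l). j + l \<le> n} = Sigma {..n} (\<lambda>j. {..n - j})" by auto
  then show ?thesis by (simp add: sum.Sigma)
qed

lemma sum_triangle_swap:
  "(\<Sum>j\<le>n. \<Sum>l\<le>n - j. G j l) = (\<Sum>l\<le>n. \<Sum>j\<le>n - l. G j (l::nat))"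
proof -
  have "(\<Sum>l\<le>n. \<Sum>j\<le>n - l. G j l) = (\<Sum>(l,j)\<in>{(l,j). l + j \<le> (n::nat)}. G j l)"
    by (rule sum_triangle_Sigma)
  also have "\<dots> = (\<Sum>(j,l)\<in>{(j,l). j + l \<le> (n::nat)}. G j l)"
    by (rule sum.reindex_bij_witness[where i="\<lambda>(a,b). (b,a)" and j="\<lambda>(a,b). (b,a)"]) auto
  finally show ?thesis by (simp add: sum_triangle_Sigma)
qed

lemma sum_atMost_rev: "(\<Sum>i\<le>(b::nat). f i) = (\<Sum>i\<le>b. f (b - i))"
  using sum.atLeastAtMost_rev[of f 0 b] by (simp add: atLeast0AtMost)

lemma tmul_assoc: "tmul (tmul x y) z = tmul x (tmul y z :: 'a::field tens)"
proof
  fix w :: "vgen list"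
  define n where "n = length w"
  define G where "G j l = x (take j w) * y (take l (drop j w)) * z (drop (j + l) w)" for j l
  have "tmul (tmul x y) z w = (\<Sum>k\<le>n. \<Sum>j\<le>k. G j (k - j))"
    unfolding tmul_def n_def G_def
    by (rule sum.cong) (auto simp: sum_distrib_right min_def take_drop intro!: sum.cong)
  also have "\<dots> = (\<Sum>(j,l)\<in>{(j,l). j + l \<le> n}. G j l)"
    by (rule sum.triangle_reindex_eq[symmetric])
  also have "\<dots> = (\<Sum>j\<le>n. \<Sum>l\<le>n - j. G j l)"
    by (rule sum_triangle_Sigma[symmetric])
  also have "\<dots> = tmul x (tmul y z) w"
    unfolding tmul_def n_def G_def
    by (rule sum.cong) (auto simp: sum_distrib_left mult.assoc add.commute)
  finally show "tmul (tmul x y) z w = tmul x (tmul y z) w" .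
qed

lemma tmul_sum_left: "tmul (\<lambda>w. \<Sum>i\<in>S. f i w) y = (\<lambda>w. \<Sum>i\<in>S. tmul (f i) y w)"
  unfolding tmul_def by (simp add: sum_distrib_right, rule ext, rule sum.swap)

lemma tmul_sum_right: "tmul y (\<lambda>w. \<Sum>i\<in>S. f i w) = (\<lambda>w. \<Sum>i\<in>S. tmul y (f i) w)"
  unfolding tmul_def by (simp add: sum_distrib_left, rule ext, rule sum.swap)

lemma tmul_add_left: "tmul (\<lambda>w. x w + y w) z = (\<lambda>w. tmul x z w + tmul y z w)"
  unfolding tmul_def by (simp add: distrib_right sum.distrib)

lemma tmul_add_right: "tmul z (\<lambda>w. x w + y w) = (\<lambda>w. tmul z x w + tmul z y w)"
  unfolding tmul_def by (simp add: distrib_left sum.distrib)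

lemma tmul_diff_left: "tmul (\<lambda>w. x w - y w) z = (\<lambda>w. tmul x z w - tmul y z w :: 'a::field)"
  unfolding tmul_def by (simp add: left_diff_distrib sum_subtractf)

lemma tmul_diff_right: "tmul z (\<lambda>w. x w - y w) = (\<lambda>w. tmul z x w - tmul z y w :: 'a::field)"
  unfolding tmul_def by (simp add: right_diff_distrib sum_subtractf)

lemma tmul_smult_left: "tmul (\<lambda>w. a * x w) y = (\<lambda>w. a * tmul x y w :: 'a::field)"
  unfolding tmul_def by (simp add: sum_distrib_left mult.assoc)

lemma tmul_smult_right: "tmul x (\<lambda>w. a * y w) = (\<lambda>w. a * tmul x y w :: 'a::field)"
  unfolding tmul_def by (simp add: sum_distrib_left mult.assoc mult.left_commute)

lemma tmul_zero_left: "tmul (\<lambda>w. 0) y = (\<lambda>w. 0 :: 'a::field)"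
  unfolding tmul_def by simp

lemma tmul_zero_right: "tmul y (\<lambda>w. 0) = (\<lambda>w. 0 :: 'a::field)"
  unfolding tmul_def by simp

lemma tmul_mon_Nil_left: "tmul (mon []) y = (y :: 'a::field tens)"
proof
  fix w :: "vgen list"
  have "tmul (mon []) y w = (\<Sum>k\<le>length w. if k = 0 then y w else 0)"
    unfolding tmul_def mon_def by (rule sum.cong) auto
  then show "tmul (mon []) y w = y w" by simp
qed

lemma tmul_mon_Nil_right: "tmul y (mon []) = (y :: 'a::field tens)"
proof
  fix w :: "vgen list"
  have "tmul y (mon []) w = (\<Sum>k\<le>length w. if k = length w then y w else 0)"
    unfolding tmul_def mon_def by (rule sum.cong) auto
  then show "tmul y (mon []) w = y w" by simp
qed

definition fin_supp :: "'a::zero tens \<Rightarrow> bool" where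
  "fin_supp x \<longleftrightarrow> finite {w. x w \<noteq> 0}"

lemma fin_supp_mon: "fin_supp (mon u :: 'a::field tens)"
proof -
  have "{w. (mon u :: 'a tens) w \<noteq> 0} \<subseteq> {u}" by (auto simp: mon_def)
  then show ?thesis unfolding fin_supp_def by (rule finite_subset) simp
qed

lemma fin_supp_zero: "fin_supp (\<lambda>w. 0)"
  by (simp add: fin_supp_def)

lemma fin_supp_add: "fin_supp x \<Longrightarrow> fin_supp y \<Longrightarrow> fin_supp (\<lambda>w. x w + y w :: 'a::field)"
  unfolding fin_supp_def by (rule finite_subset[of _ "{w. x w \<noteq> 0} \<union> {w. y w \<noteq> 0}"]) auto

lemma fin_supp_diff: "fin_supp x \<Longrightarrow> fin_supp y \<Longrightarrow> fin_supp (\<lambda>w. x w - y w :: 'a::field)"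
  unfolding fin_supp_def by (rule finite_subset[of _ "{w. x w \<noteq> 0} \<union> {w. y w \<noteq> 0}"]) auto

lemma fin_supp_smult: "fin_supp x \<Longrightarrow> fin_supp (\<lambda>w. a * x w :: 'a::field)"
  unfolding fin_supp_def by (rule finite_subset[of _ "{w. x w \<noteq> 0}"]) auto

lemma fin_supp_sum:
  "finite S \<Longrightarrow> (\<And>i. i \<in> S \<Longrightarrow> fin_supp (f i)) \<Longrightarrow> fin_supp (\<lambda>w. \<Sum>i\<in>S. f i w :: 'a::field)"
  by (induction S rule: finite_induct) (simp_all add: fin_supp_zero fin_supp_add)

lemma fin_supp_tmul:
  assumes "fin_supp x" and "fin_supp y"
  shows "fin_supp (tmul x y :: 'a::field tens)"
proof -
  have "{w. tmul x y w \<noteq> 0} \<subseteq> (\<lambda>(u,v). u @ v) ` ({w. x w \<noteq> 0} \<times> {w. y w \<noteq> 0})"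
  proof
    fix w assume "w \<in> {w. tmul x y w \<noteq> 0}"
    then obtain k where "x (take k w) * y (drop k w) \<noteq> 0"
      unfolding tmul_def by (auto elim: sum.not_neutral_contains_not_neutral)
    then show "w \<in> (\<lambda>(u,v). u @ v) ` ({w. x w \<noteq> 0} \<times> {w. y w \<noteq> 0})"
      by (auto intro!: image_eqI[where x="(take k w, drop k w)"])
  qed
  moreover have "finite ((\<lambda>(u,v). u @ v) ` ({w. x w \<noteq> 0} \<times> {w. y w \<noteq> 0}))"
    using assms unfolding fin_supp_def by simp
  ultimately show ?thesis unfolding fin_supp_def by (rule finite_subset)
qed

lemma sum_mon_expansion:
  "fin_supp x \<Longrightarrow> x = (\<lambda>w. \<Sum>u\<in>{w. x w \<noteq> 0}. x u * mon u w :: 'a::field)"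
proof
  fix w assume "fin_supp x"
  have "(\<Sum>u\<in>{w. x w \<noteq> 0}. x u * mon u w) = (\<Sum>u\<in>{w. x w \<noteq> 0}. if u = w then x w else 0)"
    by (rule sum.cong) (auto simp: mon_def)
  also have "\<dots> = x w"
    using \<open>fin_supp x\<close> unfolding fin_supp_def by (simp add: sum.delta')
  finally show "x w = (\<Sum>u\<in>{w. x w \<noteq> 0}. x u * mon u w)" by simp
qed

lemma tmul_sum_mon_expansion:
  assumes "fin_supp x" and "fin_supp y"
  shows "tmul x y = (\<lambda>w. \<Sum>u\<in>{w. x w \<noteq> 0}. \<Sum>v\<in>{w. y w \<noteq> 0}. (x u * y v) * mon (u @ v) w :: 'a::field)"
proof -
  have "tmul x y = tmul (\<lambda>w. \<Sum>u\<in>{w. x w \<noteq> 0}. x u * mon u w) (\<lambda>w. \<Sum>v\<in>{w. y w \<noteq> 0}. y v * mon v w)"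
    using sum_mon_expansion[OF assms(1)] sum_mon_expansion[OF assms(2)] by simp
  then show ?thesis
    by (simp add: tmul_sum_left tmul_sum_right tmul_smult_left tmul_smult_right tmul_mon_mon mult.assoc)
qed

lemma act1_eq_sum_superset:
  "finite S \<Longrightarrow> {w. x w \<noteq> 0} \<subseteq> S \<Longrightarrow> act1 r x = (\<lambda>w. \<Sum>u\<in>S. x u * act1w r u w :: 'a::field)"
  unfolding act1_def by (rule ext, rule sum.mono_neutral_left) auto

lemma act1_add:
  assumes "fin_supp x" and "fin_supp y"
  shows "act1 r (\<lambda>w. x w + y w) = (\<lambda>w. act1 r x w + act1 r y w :: 'a::field)"
proof -
  let ?S = "{w. x w \<noteq> 0} \<union> {w. y w \<noteq> 0}"
  have S: "finite ?S" using assms by (simp add: fin_supp_def)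
  have "act1 r (\<lambda>w. x w + y w) = (\<lambda>w. \<Sum>u\<in>?S. (x u + y u) * act1w r u w)"
    by (rule act1_eq_sum_superset[OF S]) auto
  then show ?thesis
    by (simp add: act1_eq_sum_superset[OF S, of x] act1_eq_sum_superset[OF S, of y]
        distrib_right sum.distrib)
qed

lemma act1_diff:
  assumes "fin_supp x" and "fin_supp y"
  shows "act1 r (\<lambda>w. x w - y w) = (\<lambda>w. act1 r x w - act1 r y w :: 'a::field)"
proof -
  let ?S = "{w. x w \<noteq> 0} \<union> {w. y w \<noteq> 0}"
  have S: "finite ?S" using assms by (simp add: fin_supp_def)
  have "act1 r (\<lambda>w. x w - y w) = (\<lambda>w. \<Sum>u\<in>?S. (x u - y u) * act1w r u w)"
    by (rule act1_eq_sum_superset[OF S]) auto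
  then show ?thesis
    by (simp add: act1_eq_sum_superset[OF S, of x] act1_eq_sum_superset[OF S, of y]
        left_diff_distrib sum_subtractf)
qed

lemma act1_smult:
  assumes "fin_supp x"
  shows "act1 r (\<lambda>w. a * x w) = (\<lambda>w. a * act1 r x w :: 'a::field)"
proof -
  let ?S = "{w. x w \<noteq> 0}"
  have S: "finite ?S" using assms by (simp add: fin_supp_def)
  have "act1 r (\<lambda>w. a * x w) = (\<lambda>w. \<Sum>u\<in>?S. (a * x u) * act1w r u w)"
    by (rule act1_eq_sum_superset[OF S]) auto
  then show ?thesis
    by (simp add: act1_eq_sum_superset[OF S, of x] sum_distrib_left mult.assoc)
qed

lemma act1_zero: "act1 r (\<lambda>w. 0) = (\<lambda>w. 0 :: 'a::field)"
  unfolding act1_def by simp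

lemma act1_sum:
  "finite S \<Longrightarrow> (\<And>i. i \<in> S \<Longrightarrow> fin_supp (f i)) \<Longrightarrow>
   act1 r (\<lambda>w. \<Sum>i\<in>S. f i w) = (\<lambda>w. \<Sum>i\<in>S. act1 r (f i) w :: 'a::field)"
proof (induction S rule: finite_induct)
  case empty
  then show ?case by (simp add: act1_zero)
next
  case (insert a F)
  then have "act1 r (\<lambda>w. f a w + (\<Sum>i\<in>F. f i w)) =
      (\<lambda>w. act1 r (f a) w + act1 r (\<lambda>w. \<Sum>i\<in>F. f i w) w)"
    by (intro act1_add) (auto intro: fin_supp_sum)
  with insert show ?case by simp
qed

lemma act1_mon: "act1 r (mon u) = (act1w r u :: 'a::field tens)"
proof -
  have "act1 r (mon u) = (\<lambda>w. \<Sum>u'\<in>{u}. (mon u :: 'a tens) u' * act1w r u' w)"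
    by (rule act1_eq_sum_superset) (auto simp: mon_def)
  then show ?thesis by (simp add: mon_def)
qed

lemma fin_supp_act1g: "fin_supp (act1g i g :: 'a::field tens)"
  by (cases g) (auto simp: tsmult_def fin_supp_smult fin_supp_mon fin_supp_zero)

lemma fin_supp_act1w: "fin_supp (act1w r u :: 'a::field tens)"
  by (induction u arbitrary: r) (simp_all add: fin_supp_mon fin_supp_zero fin_supp_sum fin_supp_tmul fin_supp_act1g)

lemma act1w_single: "act1w r [g] = (act1g r g :: 'a::field tens)"
proof
  fix w
  have "act1w r [g] w = (\<Sum>i\<le>r. if i = r then (act1g r g w :: 'a) else 0)"
    by (simp only: act1w.simps) (rule sum.cong, auto simp: tmul_mon_Nil_right tmul_zero_right)
  then show "act1w r [g] w = (act1g r g w :: 'a)" by simp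
qed

lemma act1w_append:
  "act1w r (u @ v) = (\<lambda>w. \<Sum>i\<le>r. tmul (act1w (r - i) u) (act1w i v) w :: 'a::field)"
proof (induction u arbitrary: r)
  case Nil
  show ?case
  proof
    fix w
    have "(\<Sum>i\<le>r. tmul (act1w (r - i) []) (act1w i v) w) = (\<Sum>i\<le>r. if i = r then (act1w r v w :: 'a) else 0)"
      by (rule sum.cong) (auto simp: tmul_mon_Nil_left tmul_zero_left)
    then show "act1w r ([] @ v) w = (\<Sum>i\<le>r. tmul (act1w (r - i) []) (act1w i v) w :: 'a)"
      by simp
  qed
next
  case (Cons g u)
  show ?case
  proof
    fix w
    have "act1w r ((g # u) @ v) w = (\<Sum>a\<le>r. tmul (act1g a g) (act1w (r - a) (u @ v)) w :: 'a)"
      by simp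
    also have "\<dots> = (\<Sum>a\<le>r. \<Sum>i\<le>r - a. tmul (tmul (act1g a g) (act1w (r - a - i) u)) (act1w i v) w)"
      by (simp add: Cons.IH tmul_sum_right tmul_assoc)
    also have "\<dots> = (\<Sum>i\<le>r. \<Sum>a\<le>r - i. tmul (tmul (act1g a g) (act1w (r - a - i) u)) (act1w i v) w)"
      by (rule sum_triangle_swap)
    also have "\<dots> = (\<Sum>i\<le>r. tmul (act1w (r - i) (g # u)) (act1w i v) w)"
      by (simp add: tmul_sum_left diff_commute add.commute)
    finally show "act1w r ((g # u) @ v) w = (\<Sum>i\<le>r. tmul (act1w (r - i) (g # u)) (act1w i v) w :: 'a)" .
  qed
qed

lemma act1_tmul:
  assumes "fin_supp x" and "fin_supp y"
  shows "act1 r (tmul x y) = (\<lambda>w. \<Sum>i\<le>r. tmul (act1 (r - i) x) (act1 i y) w :: 'a::field)"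
proof -
  let ?Sx = "{w. x w \<noteq> 0}" and ?Sy = "{w. y w \<noteq> 0}"
  have Sx: "finite ?Sx" and Sy: "finite ?Sy" using assms by (auto simp: fin_supp_def)
  have "act1 r (tmul x y) = act1 r (\<lambda>w. \<Sum>u\<in>?Sx. \<Sum>v\<in>?Sy. (x u * y v) * mon (u @ v) w)"
    by (simp add: tmul_sum_mon_expansion[OF assms])
  also have "\<dots> = (\<lambda>w. \<Sum>u\<in>?Sx. \<Sum>v\<in>?Sy. (x u * y v) * act1w r (u @ v) w)"
    by (simp add: act1_sum Sx Sy fin_supp_sum fin_supp_smult fin_supp_mon act1_smult act1_mon)
  also have "\<dots> = (\<lambda>w. \<Sum>u\<in>?Sx. \<Sum>v\<in>?Sy. \<Sum>i\<le>r. (x u * y v) * tmul (act1w (r - i) u) (act1w i v) w)"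
    by (simp add: act1w_append sum_distrib_left)
  also have "\<dots> = (\<lambda>w. \<Sum>i\<le>r. \<Sum>u\<in>?Sx. \<Sum>v\<in>?Sy. (x u * y v) * tmul (act1w (r - i) u) (act1w i v) w)"
    by (rule ext, subst sum.swap) (simp add: sum.swap[of _ ?Sy])
  also have "\<dots> = (\<lambda>w. \<Sum>i\<le>r. tmul (act1 (r - i) x) (act1 i y) w)"
    by (simp add: act1_def tmul_sum_left tmul_sum_right
        tmul_smult_left tmul_smult_right sum_distrib_left mult.assoc)
  finally show ?thesis .
qed

lemma of_int_ibinom: "of_int (ibinom a r) = (of_int a :: rat) gchoose r"
proof (cases "0 \<le> a")
  case True
  then obtain n where "a = int n" by (metis nonneg_eq_int)
  then show ?thesis by (simp add: ibinom_def binomial_gbinomial)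
next
  case False
  define N where "N = nat (- a)"
  have a: "a = - int N" and N: "N \<ge> 1" using False by (auto simp: N_def)
  have "(of_int a :: rat) gchoose r = (-1) ^ r * ((of_nat N + of_nat r - 1) gchoose r)"
    using gbinomial_minus[of "of_nat N :: rat" r] a by simp
  also have "(of_nat N + of_nat r - 1 :: rat) = of_nat (N + r - 1)"
    using N by (simp add: of_nat_diff)
  finally have "(of_int a :: rat) gchoose r = (-1) ^ r * of_nat ((N + r - 1) choose r)"
    by (simp add: binomial_gbinomial)
  moreover have "ibinom a r = (-1) ^ r * int ((N + r - 1) choose r)"
    using False by (simp add: ibinom_def N_def)
  ultimately show ?thesis by simp
qed

lemma ibinom_0 [simp]: "ibinom a 0 = 1"
  by (simp add: ibinom_def)

lemma ibinom_1: "ibinom a 1 = a"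
  by (simp add: ibinom_def)

lemma ibinom_Suc: "(int r + 1) * ibinom a (Suc r) = (a - int r) * ibinom a r"
proof -
  have "(of_nat (Suc r) * ((of_int a :: rat) gchoose Suc r)) = (of_int a - of_nat r) * (of_int a gchoose r)"
    unfolding gbinomial_absorption gbinomial_absorb_comp ..
  then have "(of_int (int r + 1) * of_int (ibinom a (Suc r)) :: rat) = of_int (a - int r) * of_int (ibinom a r)"
    by (simp add: of_int_ibinom add.commute)
  then show ?thesis by (simp only: of_int_mult[symmetric] of_int_eq_iff)
qed

lemma six_ibinom_3: "6 * ibinom a 3 = a * (a - 1) * (a - 2)"
proof -
  have two: "2 * ibinom a 2 = (a - 1) * a" and three: "3 * ibinom a 3 = (a - 2) * ibinom a 2"
    using ibinom_Suc[of 1 a] ibinom_Suc[of 2 a]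
    by (simp_all add: ibinom_def numeral_3_eq_3 numeral_2_eq_2)
  have "6 * ibinom a 3 = 2 * (3 * ibinom a 3)" by simp
  also have "\<dots> = (a - 2) * (2 * ibinom a 2)" unfolding three by (simp add: mult.left_commute)
  finally show ?thesis unfolding two by (simp add: mult.commute mult.left_commute)
qed

abbreviation act_coeff :: "int \<Rightarrow> nat \<Rightarrow> int" where
  "act_coeff m i \<equiv> ibinom (1 - m) i"

lemma act_coeff_Suc: "(int r + 1) * act_coeff m (Suc r) = act_coeff m r * act_coeff (m + int r) 1"
  using ibinom_Suc[of r "1 - m"] unfolding ibinom_1 by (simp add: algebra_simps)

lemma act_coeff_vanishes: "m \<le> 1 \<Longrightarrow> 1 < m + int i \<Longrightarrow> act_coeff m i = 0"
  by (simp add: ibinom_def binomial_eq_0)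

lemma sum_index_times_act_coeff:
  "(\<Sum>i\<le>Suc j. int i * (act_coeff m i * f i)) =
   (\<Sum>i\<le>j. act_coeff m i * act_coeff (m + int i) 1 * f (Suc i))"
proof -
  have "(\<Sum>i\<le>Suc j. int i * (act_coeff m i * f i)) = (\<Sum>i\<le>j. (int i + 1) * act_coeff m (Suc i) * f (Suc i))"
    by (subst sum.atMost_Suc_shift) (simp add: algebra_simps)
  then show ?thesis by (simp only: act_coeff_Suc)
qed

lemma sum_coindex_times_act_coeff:
  "(\<Sum>i\<le>Suc j. int (Suc j - i) * (act_coeff k (Suc j - i) * f i)) =
   (\<Sum>i\<le>j. act_coeff k (j - i) * act_coeff (k + int (j - i)) 1 * f i)"
proof -
  have "(\<Sum>i\<le>Suc j. int (Suc j - i) * (act_coeff k (Suc j - i) * f i)) =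
      (\<Sum>i\<le>j. (int (j - i) + 1) * act_coeff k (Suc (j - i)) * f i)"
    by (simp, rule sum.cong) (simp_all add: Suc_diff_le algebra_simps)
  then show ?thesis by (simp only: act_coeff_Suc)
qed

lemma convolution_index_weighted:
  "(\<Sum>i\<le>Suc j. int i * (act_coeff m i * act_coeff k (Suc j - i) * \<beta> (m + int i) (k + int (Suc j - i)))) =
    (\<Sum>i\<le>j. act_coeff m i * act_coeff k (j - i) * (act_coeff (m + int i) 1 * \<beta> (m + int i + 1) (k + int (j - i))))"
proof -
  have "(\<Sum>i\<le>Suc j. int i * (act_coeff m i * act_coeff k (Suc j - i) * \<beta> (m + int i) (k + int (Suc j - i)))) =
      (\<Sum>i\<le>Suc j. int i * (act_coeff m i * (act_coeff k (Suc j - i) * \<beta> (m + int i) (k + int (Suc j - i)))))"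
    by (simp add: ac_simps)
  also have "\<dots> = (\<Sum>i\<le>j. act_coeff m i * act_coeff (m + int i) 1 *
      (act_coeff k (Suc j - Suc i) * \<beta> (m + int (Suc i)) (k + int (Suc j - Suc i))))"
    by (rule sum_index_times_act_coeff)
  finally show ?thesis by (simp add: ac_simps)
qed

lemma convolution_coindex_weighted:
  "(\<Sum>i\<le>Suc j. int (Suc j - i) * (act_coeff m i * act_coeff k (Suc j - i) * \<beta> (m + int i) (k + int (Suc j - i)))) =
    (\<Sum>i\<le>j. act_coeff m i * act_coeff k (j - i) * (act_coeff (k + int (j - i)) 1 * \<beta> (m + int i) (k + int (j - i) + 1)))"
proof -
  have "(\<Sum>i\<le>Suc j. int (Suc j - i) * (act_coeff m i * act_coeff k (Suc j - i) * \<beta> (m + int i) (k + int (Suc j - i)))) =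
      (\<Sum>i\<le>Suc j. int (Suc j - i) * (act_coeff k (Suc j - i) * (act_coeff m i * \<beta> (m + int i) (k + int (Suc j - i)))))"
    by (simp add: ac_simps)
  also have "\<dots> = (\<Sum>i\<le>j. act_coeff k (j - i) * act_coeff (k + int (j - i)) 1 *
      (act_coeff m i * \<beta> (m + int i) (k + int (Suc j - i))))"
    by (rule sum_coindex_times_act_coeff)
  also have "\<dots> = (\<Sum>i\<le>j. act_coeff m i * act_coeff k (j - i) * (act_coeff (k + int (j - i)) 1 * \<beta> (m + int i) (k + int (j - i) + 1)))"
    by (rule sum.cong) (simp_all add: Suc_diff_le ac_simps)
  finally show ?thesis .
qed

text \<open>Instantiated with the structure constants of the bracket (\<open>e = act_coeff\<close>, resp. the
  cocycle with \<open>e t j = \<delta>\<^sub>j\<^sub>0\<close>), this says that \<open>L\<^sub>1\<^sup>(\<^sup>j\<^sup>)\<close> respects the Lie bracket.\<close>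

lemma act_coeff_convolution:
  fixes \<beta> :: "int \<Rightarrow> int \<Rightarrow> int" and e :: "int \<Rightarrow> nat \<Rightarrow> int"
  assumes e_0: "\<And>t. e t 0 = 1"
    and e_Suc: "\<And>t j. (int j + 1) * e t (Suc j) = e t j * e (t + int j) 1"
    and \<beta>_rec: "\<And>m k. e (m + k) 1 * \<beta> m k = act_coeff m 1 * \<beta> (m + 1) k + act_coeff k 1 * \<beta> m (k + 1)"
  shows "(\<Sum>i\<le>j. act_coeff m i * act_coeff k (j - i) * \<beta> (m + int i) (k + int (j - i))) = e (m + k) j * \<beta> m k"
proof (induction j)
  case 0
  then show ?case by (simp add: e_0)
next
  case (Suc j)
  define t where "t i = act_coeff m i * act_coeff k (Suc j - i) * \<beta> (m + int i) (k + int (Suc j - i))" for i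
  have "(int j + 1) * (\<Sum>i\<le>Suc j. t i) = (\<Sum>i\<le>Suc j. int i * t i) + (\<Sum>i\<le>Suc j. int (Suc j - i) * t i)"
    unfolding sum.distrib[symmetric] sum_distrib_left by (rule sum.cong) (auto simp: of_nat_diff algebra_simps)
  also have "\<dots> = (\<Sum>i\<le>j. act_coeff m i * act_coeff k (j - i) * (e (m + k + int j) 1 * \<beta> (m + int i) (k + int (j - i))))"
  proof -
    have summand: "act_coeff (m + int i) 1 * \<beta> (m + int i + 1) (k + int (j - i)) +
        act_coeff (k + int (j - i)) 1 * \<beta> (m + int i) (k + int (j - i) + 1) =
        e (m + k + int j) 1 * \<beta> (m + int i) (k + int (j - i))" if "i \<le> j" for i
    proof -
      have "m + int i + (k + int (j - i)) = m + k + int j" using that by (simp add: of_nat_diff)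
      then show ?thesis using \<beta>_rec[of "m + int i" "k + int (j - i)"] by (simp add: add.assoc)
    qed
    show ?thesis
      unfolding t_def convolution_index_weighted convolution_coindex_weighted
      unfolding sum.distrib[symmetric]
      by (rule sum.cong[OF refl], simp only: distrib_left[symmetric] summand atMost_iff)
  qed
  also have "\<dots> = e (m + k + int j) 1 * (e (m + k) j * \<beta> m k)"
    unfolding Suc.IH[symmetric] sum_distrib_left by (rule sum.cong) (simp_all add: algebra_simps)
  also have "\<dots> = (int j + 1) * (e (m + k) (Suc j) * \<beta> m k)"
    using e_Suc[of j "m + k"] by (simp add: algebra_simps)
  finally show ?case unfolding t_def by simp
qed

definition cocycle :: "int \<Rightarrow> int \<Rightarrow> int" where
  "cocycle x y = (if x + y = 0 then ibinom (x + 1) 3 else 0)"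

lemma act_coeff_convolution_diff:
  "(\<Sum>i\<le>j. act_coeff m i * act_coeff k (j - i) * ((m + int i) - (k + int (j - i)))) =
   act_coeff (m + k) j * (m - k)"
proof -
  have "(\<Sum>i\<le>j. act_coeff m i * act_coeff k (j - i) * (\<lambda>x y. x - y) (m + int i) (k + int (j - i))) =
      act_coeff (m + k) j * (\<lambda>x y. x - y) m k"
  proof (rule act_coeff_convolution)
    show "(int j + 1) * act_coeff t (Suc j) = act_coeff t j * act_coeff (t + int j) 1" for t j
      by (rule act_coeff_Suc)
    show "act_coeff (m + k) 1 * (m - k) = act_coeff m 1 * (m + 1 - k) + act_coeff k 1 * (m - (k + 1))" for m k
      unfolding ibinom_1 by (simp add: algebra_simps)
  qed simp
  then show ?thesis by simp
qed

lemma act_coeff_convolution_cocycle: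
  "(\<Sum>i\<le>j. act_coeff m i * act_coeff k (j - i) * cocycle (m + int i) (k + int (j - i))) =
   (if j = 0 then cocycle m k else 0)"
proof -
  have "act_coeff m 1 * cocycle (m + 1) k + act_coeff k 1 * cocycle m (k + 1) = 0" for m k
  proof (cases "m + k + 1 = 0")
    case True
    then have k: "k = - 1 - m" by simp
    have "6 * (act_coeff m 1 * cocycle (m + 1) k + act_coeff k 1 * cocycle m (k + 1)) =
        (1 - m) * (6 * ibinom (m + 2) 3) + (2 + m) * (6 * ibinom (m + 1) 3)"
      unfolding ibinom_1 cocycle_def k by (simp add: algebra_simps)
    also have "\<dots> = 0" unfolding six_ibinom_3 by (simp add: algebra_simps)
    finally show ?thesis by simp
  next
    case False
    then show ?thesis by (simp add: cocycle_def)
  qed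
  then show ?thesis
    using act_coeff_convolution[where e = "\<lambda>t j. if j = 0 then 1 else 0" and \<beta> = cocycle]
    by simp
qed

lemma vacK_smult: "x \<in> vacK c \<Longrightarrow> (\<lambda>w. a * x w) \<in> vacK c"
  using vacK.smult[of x c a] by (simp add: tsmult_def)

lemma vacK_sum:
  "finite S \<Longrightarrow> (\<And>i. i \<in> S \<Longrightarrow> f i \<in> vacK c) \<Longrightarrow> (\<lambda>w. \<Sum>i\<in>S. f i w) \<in> vacK c"
  by (induction S rule: finite_induct) (simp_all add: vacK.zero vacK.add)

lemma tmul_left_vacK:
  assumes "fin_supp p" and "\<And>u. tmul (mon u) z \<in> vacK c"
  shows "tmul p z \<in> vacK (c::'a::field)"
proof -
  have "tmul p z = tmul (\<lambda>w. \<Sum>u\<in>{w. p w \<noteq> 0}. p u * mon u w) z"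
    using sum_mon_expansion[OF assms(1)] by simp
  also have "\<dots> = (\<lambda>w. \<Sum>u\<in>{w. p w \<noteq> 0}. p u * tmul (mon u) z w)"
    by (simp add: tmul_sum_left tmul_smult_left)
  finally show ?thesis
    using assms by (auto simp: fin_supp_def intro!: vacK_sum vacK_smult)
qed

lemma tmul_right_vacK:
  assumes "fin_supp q" and "\<And>v. tmul z (mon v) \<in> vacK c"
  shows "tmul z q \<in> vacK (c::'a::field)"
proof -
  have "tmul z q = tmul z (\<lambda>w. \<Sum>v\<in>{w. q w \<noteq> 0}. q v * mon v w)"
    using sum_mon_expansion[OF assms(1)] by simp
  also have "\<dots> = (\<lambda>w. \<Sum>v\<in>{w. q w \<noteq> 0}. q v * tmul z (mon v) w)"
    by (simp add: tmul_sum_right tmul_smult_right)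
  finally show ?thesis
    using assms by (auto simp: fin_supp_def intro!: vacK_sum vacK_smult)
qed

lemma vbr_LL:
  "vbr (L x) (L y) =
   (\<lambda>w. of_int (x - y) * mon [L (x + y)] w + (1/2 * of_int (cocycle x y)) * mon [C] w :: 'a::field)"
  by (rule ext) (simp add: cocycle_def)

lemma fin_supp_vbr: "fin_supp (vbr g h :: 'a::field tens)"
  by (cases g; cases h) (simp_all only: vbr_LL vbr.simps fin_supp_zero fin_supp_add fin_supp_smult fin_supp_mon)

definition comm_rel :: "vgen \<Rightarrow> vgen \<Rightarrow> 'a::field tens" where
  "comm_rel g h = (\<lambda>w. mon [g, h] w - mon [h, g] w - vbr g h w)"

lemma fin_supp_comm_rel: "fin_supp (comm_rel g h :: 'a::field tens)"
  unfolding comm_rel_def by (intro fin_supp_diff fin_supp_mon fin_supp_vbr)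

lemma fin_supp_vacK: "z \<in> vacK c \<Longrightarrow> fin_supp z"
  by (induction rule: vacK.induct)
    (simp_all add: tsmult_def fin_supp_zero fin_supp_add fin_supp_smult fin_supp_tmul fin_supp_mon
      fin_supp_diff fin_supp_comm_rel[unfolded comm_rel_def])

inductive_set comm_rel_span :: "'a::field tens set" where
  zero: "(\<lambda>w. 0) \<in> comm_rel_span"
| add: "x \<in> comm_rel_span \<Longrightarrow> y \<in> comm_rel_span \<Longrightarrow> (\<lambda>w. x w + y w) \<in> comm_rel_span"
| smult: "x \<in> comm_rel_span \<Longrightarrow> (\<lambda>w. a * x w) \<in> comm_rel_span"
| gen: "comm_rel g h \<in> comm_rel_span"

lemma comm_rel_span_sum:
  "finite S \<Longrightarrow> (\<And>i. i \<in> S \<Longrightarrow> f i \<in> comm_rel_span) \<Longrightarrow> (\<lambda>w. \<Sum>i\<in>S. f i w) \<in> comm_rel_span"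
  by (induction S rule: finite_induct) (simp_all add: comm_rel_span.zero comm_rel_span.add)

lemma tmul_comm_rel_span_vacK:
  assumes "x \<in> comm_rel_span" and "fin_supp p" and "fin_supp q"
  shows "tmul p (tmul x q) \<in> vacK c"
  using assms(1)
proof (induction rule: comm_rel_span.induct)
  case zero
  then show ?case by (simp add: tmul_zero_left tmul_zero_right vacK.zero)
next
  case (add x y)
  then show ?case by (simp add: tmul_add_left tmul_add_right vacK.add)
next
  case (smult x a)
  then show ?case by (simp add: tmul_smult_left tmul_smult_right vacK_smult)
next
  case (gen g h)
  have "tmul (mon u) (tmul (comm_rel g h) q) \<in> vacK c" for u
  proof -
    have "tmul (tmul (mon u) (comm_rel g h)) (mon v) \<in> vacK c" for v
      unfolding tmul_assoc comm_rel_def by (rule vacK.comm)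
    then have "tmul (tmul (mon u) (comm_rel g h)) q \<in> vacK c"
      by (rule tmul_right_vacK[OF assms(3)])
    then show ?thesis by (simp only: tmul_assoc)
  qed
  then show ?case by (rule tmul_left_vacK[OF assms(2)])
qed

lemma act1g_L: "act1g i (L m) = (\<lambda>w. of_int (act_coeff m i) * mon [L (m + int i)] w :: 'a::field)"
  by (simp add: tsmult_def)

lemma act1w_pair: "act1w b [g, h] = (\<lambda>w. \<Sum>i\<le>b. tmul (act1g i g) (act1g (b - i) h) w :: 'a::field)"
proof -
  have "act1w b [g, h] = (\<lambda>w. \<Sum>i\<le>b. tmul (act1g i g) (act1w (b - i) [h]) w :: 'a)"
    by (rule act1w.simps(2))
  then show ?thesis by (simp only: act1w_single)
qed

lemma act1w_LL:
  "act1w b [L m, L k] =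
   (\<lambda>w. \<Sum>i\<le>b. of_int (act_coeff m i * act_coeff k (b - i)) * mon [L (m + int i), L (k + int (b - i))] w :: 'a::field)"
  unfolding act1w_pair act1g_L by (simp add: tmul_smult_left tmul_smult_right tmul_mon_mon mult.assoc)

lemma act1w_LL_reversed:
  "act1w b [L k, L m] =
   (\<lambda>w. \<Sum>i\<le>b. of_int (act_coeff m i * act_coeff k (b - i)) * mon [L (k + int (b - i)), L (m + int i)] w :: 'a::field)"
proof
  fix w
  have "act1w b [L k, L m] w =
      (\<Sum>i\<le>b. of_int (act_coeff k i * act_coeff m (b - i)) * (mon [L (k + int i), L (m + int (b - i))] w :: 'a))"
    by (simp only: act1w_LL)
  also have "\<dots> = (\<Sum>i\<le>b. of_int (act_coeff k (b - i) * act_coeff m (b - (b - i))) *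
        (mon [L (k + int (b - i)), L (m + int (b - (b - i)))] w :: 'a))"
    by (rule sum_atMost_rev)
  also have "\<dots> = (\<Sum>i\<le>b. of_int (act_coeff m i * act_coeff k (b - i)) * mon [L (k + int (b - i)), L (m + int i)] w)"
    by (rule sum.cong) (auto simp: mult.commute)
  finally show "act1w b [L k, L m] w = \<dots>" .
qed

lemma act1_vbr_LL:
  "act1 b (vbr (L m) (L k)) =
   (\<lambda>w. of_int ((m - k) * act_coeff (m + k) b) * mon [L (m + k + int b)] w
      + (1/2 * of_int (cocycle m k)) * (if b = 0 then mon [C] w else 0) :: 'a::field)"
proof -
  have "act1 b (vbr (L m) (L k)) =
      (\<lambda>w. act1 b (\<lambda>w. of_int (m - k) * mon [L (m + k)] w) w + act1 b (\<lambda>w. (1/2 * of_int (cocycle m k)) * mon [C] w) w :: 'a)"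
    unfolding vbr_LL by (rule act1_add) (rule fin_supp_smult fin_supp_mon)+
  also have "\<dots> = (\<lambda>w. of_int (m - k) * act1w b [L (m + k)] w + (1/2 * of_int (cocycle m k)) * act1w b [C] w)"
    by (simp only: act1_smult[OF fin_supp_mon] act1_mon)
  finally show ?thesis by (simp only: act1w_single act1g_L act1g.simps(2)) (auto simp: algebra_simps)
qed

lemma act1_vbr_LL_convolution:
  "act1 b (vbr (L m) (L k)) =
   (\<lambda>w. \<Sum>i\<le>b. of_int (act_coeff m i * act_coeff k (b - i)) * vbr (L (m + int i)) (L (k + int (b - i))) w :: 'a::field)"
proof
  fix w
  define c where "c i = act_coeff m i * act_coeff k (b - i)" for i
  have "(\<Sum>i\<le>b. of_int (c i) * vbr (L (m + int i)) (L (k + int (b - i))) w) =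
      (\<Sum>i\<le>b. of_int (c i * ((m + int i) - (k + int (b - i)))) * (mon [L (m + k + int b)] w :: 'a)
        + (1/2 * of_int (c i * cocycle (m + int i) (k + int (b - i)))) * mon [C] w)"
    unfolding vbr_LL by (rule sum.cong) (auto simp: algebra_simps of_nat_diff)
  also have "\<dots> = of_int (\<Sum>i\<le>b. c i * ((m + int i) - (k + int (b - i)))) * mon [L (m + k + int b)] w
      + (1/2 * of_int (\<Sum>i\<le>b. c i * cocycle (m + int i) (k + int (b - i)))) * mon [C] w"
    by (simp add: sum.distrib sum_distrib_left sum_distrib_right mult.assoc)
  also have "\<dots> = act1 b (vbr (L m) (L k)) w"
    unfolding act1_vbr_LL c_def act_coeff_convolution_diff act_coeff_convolution_cocycle
    by (simp add: mult.commute)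
  finally show "act1 b (vbr (L m) (L k)) w = (\<Sum>i\<le>b. of_int (act_coeff m i * act_coeff k (b - i)) *
      (vbr (L (m + int i)) (L (k + int (b - i))) w :: 'a))"
    by (simp add: c_def)
qed

lemma act1_comm_rel_LL:
  "act1 b (comm_rel (L m) (L k)) =
   (\<lambda>w. \<Sum>i\<le>b. of_int (act_coeff m i * act_coeff k (b - i)) * comm_rel (L (m + int i)) (L (k + int (b - i))) w :: 'a::field)"
proof -
  have "act1 b (comm_rel (L m) (L k)) =
      (\<lambda>w. act1w b [L m, L k] w - act1w b [L k, L m] w - (act1 b (vbr (L m) (L k)) w :: 'a))"
    unfolding comm_rel_def by (simp only: act1_diff fin_supp_diff fin_supp_mon fin_supp_vbr act1_mon)
  also have "\<dots> = (\<lambda>w. \<Sum>i\<le>b. of_int (act_coeff m i * act_coeff k (b - i)) *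
      comm_rel (L (m + int i)) (L (k + int (b - i))) w)"
    unfolding act1w_LL[of b m k] act1w_LL_reversed[of b k m] act1_vbr_LL_convolution comm_rel_def
    by (simp add: right_diff_distrib sum_subtractf)
  finally show ?thesis .
qed

lemma act1w_CL: "act1w b [C, L k] = (\<lambda>w. of_int (act_coeff k b) * mon [C, L (k + int b)] w :: 'a::field)"
proof
  fix w
  have "act1w b [C, L k] w = (\<Sum>i\<le>b. if i = 0 then of_int (act_coeff k b) * mon [C, L (k + int b)] w else (0::'a))"
    unfolding act1w_pair
    by (rule sum.cong) (auto simp: tsmult_def tmul_smult_right tmul_mon_mon tmul_zero_left)
  then show "act1w b [C, L k] w = (of_int (act_coeff k b) * mon [C, L (k + int b)] w :: 'a)" by simp
qed

lemma act1w_LC: "act1w b [L k, C] = (\<lambda>w. of_int (act_coeff k b) * mon [L (k + int b), C] w :: 'a::field)"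
proof
  fix w
  have "act1w b [L k, C] w = (\<Sum>i\<le>b. if i = b then of_int (act_coeff k b) * mon [L (k + int b), C] w else (0::'a))"
    unfolding act1w_pair
    by (rule sum.cong) (auto simp: tsmult_def tmul_smult_left tmul_mon_mon tmul_zero_right)
  then show "act1w b [L k, C] w = (of_int (act_coeff k b) * mon [L (k + int b), C] w :: 'a)" by simp
qed

lemma act1_comm_rel_LC:
  "act1 b (comm_rel (L m) C) = (\<lambda>w. of_int (act_coeff m b) * comm_rel (L (m + int b)) C w :: 'a::field)"
proof -
  have "act1 b (comm_rel (L m) C) = (\<lambda>w. act1w b [L m, C] w - act1w b [C, L m] w :: 'a)"
    unfolding comm_rel_def by (simp add: act1_diff fin_supp_mon act1_mon del: act1w.simps)
  then show ?thesis unfolding act1w_LC act1w_CL comm_rel_def by (simp add: algebra_simps)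
qed

lemma act1_comm_rel_CL:
  "act1 b (comm_rel C (L k)) = (\<lambda>w. of_int (act_coeff k b) * comm_rel C (L (k + int b)) w :: 'a::field)"
proof -
  have "act1 b (comm_rel C (L k)) = (\<lambda>w. act1w b [C, L k] w - act1w b [L k, C] w :: 'a)"
    unfolding comm_rel_def by (simp add: act1_diff fin_supp_mon act1_mon del: act1w.simps)
  then show ?thesis unfolding act1w_LC act1w_CL comm_rel_def by (simp add: algebra_simps)
qed

lemma act1_comm_rel: "act1 b (comm_rel g h :: 'a::field tens) \<in> comm_rel_span"
proof (cases g; cases h)
  fix m k
  assume "g = L m" "h = L k"
  then show ?thesis unfolding \<open>g = L m\<close> \<open>h = L k\<close> act1_comm_rel_LL
    by (intro comm_rel_span_sum finite_atMost comm_rel_span.smult comm_rel_span.gen)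
next
  fix m
  assume "g = L m" "h = C"
  then show ?thesis by (simp add: act1_comm_rel_LC comm_rel_span.smult comm_rel_span.gen)
next
  fix k
  assume "g = C" "h = L k"
  then show ?thesis by (simp add: act1_comm_rel_CL comm_rel_span.smult comm_rel_span.gen)
next
  assume "g = C" "h = C"
  then have "comm_rel g h = (\<lambda>w. 0 :: 'a)" unfolding comm_rel_def by simp
  then show ?thesis by (simp add: act1_zero comm_rel_span.zero)
qed

lemma act1_central_rel:
  "act1 i (\<lambda>w. mon [C] w - c * mon [] w) = (if i = 0 then (\<lambda>w. mon [C] w - c * mon [] w) else (\<lambda>w. 0 :: 'a::field))"
  by (simp add: act1_diff act1_smult fin_supp_mon fin_supp_smult act1_mon act1w_single del: act1w.simps, simp)

lemma act1_vacK: "z \<in> vacK c \<Longrightarrow> act1 r z \<in> vacK c"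
proof (induction arbitrary: r rule: vacK.induct)
  case zero
  then show ?case by (simp add: act1_zero vacK.zero)
next
  case (add x y)
  then show ?case by (simp add: act1_add fin_supp_vacK vacK.add)
next
  case (smult x a)
  then show ?case by (simp add: tsmult_def act1_smult fin_supp_vacK vacK_smult)
next
  case (comm u g h v)
  have expand: "act1 r (tmul (mon u) (tmul (comm_rel g h) (mon v))) =
     (\<lambda>w. \<Sum>i\<le>r. \<Sum>j\<le>i. tmul (act1w (r - i) u) (tmul (act1 (i - j) (comm_rel g h)) (act1w j v)) w)"
    by (simp add: act1_tmul fin_supp_mon fin_supp_tmul fin_supp_comm_rel act1_mon tmul_sum_right)
  show ?case
    unfolding comm_rel_def[symmetric] expand
    by (intro vacK_sum finite_atMost tmul_comm_rel_span_vacK act1_comm_rel fin_supp_act1w)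
next
  case (central u)
  have "act1 r (tmul (mon u) (\<lambda>w. mon [C] w - c * mon [] w)) =
     (\<lambda>w. \<Sum>i\<le>r. tmul (act1w (r - i) u) (act1 i (\<lambda>w. mon [C] w - c * mon [] w)) w)"
    by (simp add: act1_tmul fin_supp_mon fin_supp_diff fin_supp_smult act1_mon)
  then show ?case
    by (simp add: act1_central_rel tmul_zero_right vacK.zero vacK.central tmul_left_vacK fin_supp_act1w
        vacK_sum)
next
  case (annih n u)
  have "act1 r (mon (u @ [L n])) =
      (\<lambda>w. \<Sum>i\<le>r. of_int (act_coeff n i) * tmul (act1w (r - i) u) (mon [L (n + int i)]) w :: 'a)"
    by (simp add: act1_mon act1w_append act1w_single tsmult_def tmul_smult_right del: act1w.simps)
  moreover have "tmul (mon u') (mon [L (n + int i)]) \<in> vacK c" for u' i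
    using annih by (simp add: tmul_mon_mon vacK.annih)
  ultimately show ?case
    by (simp add: vacK_sum vacK_smult tmul_left_vacK fin_supp_act1w)
qed

definition good_gen :: "vgen \<Rightarrow> bool" where
  "good_gen g \<longleftrightarrow> (\<exists>k. g = L k \<and> k \<le> 1)"

definition good_word :: "vgen list \<Rightarrow> bool" where
  "good_word w \<longleftrightarrow> (\<forall>g\<in>set w. good_gen g)"

lemma wdeg_simps [simp]:
  "wdeg [] = 0" "wdeg (g # w) = gdeg g + wdeg w" "wdeg (u @ v) = wdeg u + wdeg v"
  by (simp_all add: wdeg_def)

lemma good_word_simps [simp]:
  "good_word []" "good_word (g # w) \<longleftrightarrow> good_gen g \<and> good_word w"
  "good_word (u @ v) \<longleftrightarrow> good_word u \<and> good_word v"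
  by (auto simp: good_word_def)

inductive_set good_span :: "nat \<Rightarrow> int \<Rightarrow> 'a::field tens set" for l d where
  zero: "(\<lambda>w. 0) \<in> good_span l d"
| add: "x \<in> good_span l d \<Longrightarrow> y \<in> good_span l d \<Longrightarrow> (\<lambda>w. x w + y w) \<in> good_span l d"
| smult: "x \<in> good_span l d \<Longrightarrow> (\<lambda>w. a * x w) \<in> good_span l d"
| mon: "good_word v \<Longrightarrow> length v = l \<Longrightarrow> wdeg v = d \<Longrightarrow> mon v \<in> good_span l d"

lemma good_span_sum:
  "finite S \<Longrightarrow> (\<And>i. i \<in> S \<Longrightarrow> f i \<in> good_span l d) \<Longrightarrow> (\<lambda>w. \<Sum>i\<in>S. f i w) \<in> good_span l d"
  by (induction S rule: finite_induct) (simp_all add: good_span.zero good_span.add)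

lemma tmul_L_good_span:
  "y \<in> good_span l d \<Longrightarrow> k \<le> 1 \<Longrightarrow> tmul (mon [L k]) y \<in> good_span (Suc l) (d - k)"
  by (induction rule: good_span.induct)
    (simp_all add: tmul_zero_right tmul_add_right tmul_smult_right tmul_mon_mon good_gen_def
      good_span.zero good_span.add good_span.smult good_span.mon)

lemma act1w_good_word:
  "good_word v \<Longrightarrow> (act1w r v :: 'a::field tens) \<in> good_span (length v) (wdeg v - int r)"
proof (induction v arbitrary: r)
  case Nil
  then show ?case by (simp add: good_span.mon good_span.zero)
next
  case (Cons g v)
  then obtain m where g: "g = L m" and m: "m \<le> 1" and v: "good_word v" by (auto simp: good_gen_def)
  have "tmul (act1g i g) (act1w (r - i) v :: 'a tens) \<in> good_span (length (g # v)) (wdeg (g # v) - int r)"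
    if "i \<le> r" for i
  proof (cases "m + int i \<le> 1")
    case True
    have "tmul (mon [L (m + int i)]) (act1w (r - i) v :: 'a tens) \<in>
        good_span (Suc (length v)) (wdeg v - int (r - i) - (m + int i))"
      by (rule tmul_L_good_span[OF Cons.IH[OF v] True])
    moreover have "wdeg v - int (r - i) - (m + int i) = wdeg (g # v) - int r"
      using that g by (simp add: of_nat_diff)
    ultimately show ?thesis
      using g by (simp add: tsmult_def tmul_smult_left good_span.smult)
  next
    case False
    then show ?thesis
      using g m by (simp add: act_coeff_vanishes tsmult_def tmul_smult_left tmul_zero_left good_span.zero)
  qed
  then show ?case
    by (simp only: act1w.simps(2)) (intro good_span_sum; simp)
qed

lemma vacK_swap:
  "(\<lambda>w. mon (a @ [g, h] @ b) w - mon (a @ [h, g] @ b) w - tmul (mon a) (tmul (vbr g h) (mon b)) w)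
   \<in> vacK (c::'a::field)"
  using vacK.comm[of a g h b c] by (simp add: tmul_diff_left tmul_diff_right tmul_mon_mon)

lemma vacK_swap_LL:
  "(\<lambda>w. mon (a @ [L x, L y] @ b) w - (mon (a @ [L y, L x] @ b) w +
      (of_int (x - y) * mon (a @ [L (x + y)] @ b) w + (1/2 * of_int (cocycle x y)) * mon (a @ [C] @ b) w)))
   \<in> vacK (c::'a::field)"
proof -
  have "tmul (mon a) (tmul (vbr (L x) (L y)) (mon b)) =
     (\<lambda>w. of_int (x - y) * mon (a @ [L (x + y)] @ b) w + (1/2 * of_int (cocycle x y)) * mon (a @ [C] @ b) w :: 'a)"
    unfolding vbr_LL by (simp only: tmul_add_left tmul_add_right tmul_smult_left tmul_smult_right tmul_mon_mon)
  then show ?thesis using vacK_swap[of a "L x" "L y" b c] by (simp add: algebra_simps)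
qed

lemma vacK_swap_C: "(\<lambda>w. mon (a @ [C, h] @ b) w - mon (a @ [h, C] @ b) w) \<in> vacK (c::'a::field)"
  using vacK_swap[of a C h b c] by (simp add: tmul_zero_left tmul_zero_right)

lemma vacK_by_diff: "(\<lambda>w. x w - y w) \<in> vacK c \<Longrightarrow> y \<in> vacK c \<Longrightarrow> x \<in> vacK c"
  using vacK.add[of "\<lambda>w. x w - y w" c y] by simp

text \<open>\<open>L\<^sub>1\<close> is moved to the right end of the word, where it annihilates; commuting it past
  \<open>L\<^sub>k\<close> (\<open>k \<le> 0\<close>) costs the shorter word with \<open>L\<^sub>1\<^sub>+\<^sub>k\<close> in place of both (the cocycle vanishes).\<close>

lemma L1_word_vacK:
  assumes shorter: "\<And>v. length v < N \<Longrightarrow> good_word v \<Longrightarrow> v \<noteq> [] \<Longrightarrow> wdeg v \<le> 1 \<Longrightarrow> mon v \<in> vacK c"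
    and "good_word (a @ [L 1] @ b)" and "length (a @ [L 1] @ b) = N" and "wdeg (a @ [L 1] @ b) \<le> 1"
  shows "mon (a @ [L 1] @ b) \<in> vacK (c::'a::field)"
  using assms(2-4)
proof (induction b arbitrary: a)
  case Nil
  then show ?case using vacK.annih[of 1 a c] by simp
next
  case (Cons h b)
  then obtain k where h: "h = L k" and k: "k \<le> 1" by (auto simp: good_gen_def)
  show ?case
  proof (cases "k = 1")
    case True
    then show ?thesis using Cons.IH[of "a @ [L 1]"] Cons.prems h by simp
  next
    case False
    have "mon (a @ [L k, L 1] @ b) \<in> vacK c"
      using Cons.IH[of "a @ [L k]"] Cons.prems h by simp
    moreover have "mon (a @ [L (1 + k)] @ b) \<in> vacK c"
      using shorter[of "a @ [L (1 + k)] @ b"] Cons.prems h k False by (simp add: good_gen_def)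
    ultimately have "(\<lambda>w. mon (a @ [L k, L 1] @ b) w + of_int (1 - k) * mon (a @ [L (1 + k)] @ b) w) \<in> vacK c"
      by (intro vacK.add vacK_smult)
    moreover have "cocycle 1 k = 0" by (simp add: cocycle_def ibinom_def)
    ultimately show ?thesis
      using vacK_swap_LL[of a 1 k b c] h by (simp add: vacK_by_diff)
  qed
qed

lemma nonneg_wdeg_if_no_L1: "good_word u \<Longrightarrow> L 1 \<notin> set u \<Longrightarrow> 0 \<le> wdeg u"
  by (induction u) (auto simp: good_gen_def)

lemma good_word_vacK:
  "good_word v \<Longrightarrow> v \<noteq> [] \<Longrightarrow> wdeg v \<le> 1 \<Longrightarrow> mon v \<in> vacK (c::'a::field)"
proof (induction "length v" arbitrary: v rule: less_induct)
  case less
  obtain u k where v: "v = u @ [L k]"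
    using less.prems by (cases v rule: rev_cases) (auto simp: good_gen_def)
  show ?case
  proof (cases "k \<ge> -1")
    case True
    then show ?thesis using v vacK.annih[of k u c] by simp
  next
    case False
    have "L 1 \<in> set u"
      using nonneg_wdeg_if_no_L1[of u] less.prems v False by force
    then obtain a b where "u = a @ L 1 # b" by (metis split_list)
    then show ?thesis
      using L1_word_vacK[of "length v" c a "b @ [L k]"] less v by simp
  qed
qed

lemma good_span_vacK: "y \<in> good_span l d \<Longrightarrow> 1 \<le> l \<Longrightarrow> d \<le> 1 \<Longrightarrow> y \<in> vacK (c::'a::field)"
  by (induction rule: good_span.induct) (auto intro: vacK.zero vacK.add vacK_smult good_word_vacK)

inductive_set good_span_mod :: "'a::field \<Rightarrow> int \<Rightarrow> 'a tens set" for c d where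
  good: "good_word v \<Longrightarrow> wdeg v = d \<Longrightarrow> mon v \<in> good_span_mod c d"
| kernel: "z \<in> vacK c \<Longrightarrow> z \<in> good_span_mod c d"
| add: "x \<in> good_span_mod c d \<Longrightarrow> y \<in> good_span_mod c d \<Longrightarrow> (\<lambda>w. x w + y w) \<in> good_span_mod c d"
| smult: "x \<in> good_span_mod c d \<Longrightarrow> (\<lambda>w. a * x w) \<in> good_span_mod c d"

lemma good_span_mod_by_diff:
  "(\<lambda>w. x w - y w) \<in> vacK c \<Longrightarrow> y \<in> good_span_mod c d \<Longrightarrow> x \<in> good_span_mod c d"
  using good_span_mod.add[OF good_span_mod.kernel[of "\<lambda>w. x w - y w" c d], of y] by simp

lemma good_span_mod_sum:
  "finite S \<Longrightarrow> (\<And>i. i \<in> S \<Longrightarrow> f i \<in> good_span_mod c d) \<Longrightarrow> (\<lambda>w. \<Sum>i\<in>S. f i w) \<in> good_span_mod c d"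
  by (induction S rule: finite_induct)
    (simp_all add: good_span_mod.kernel vacK.zero good_span_mod.add)

lemma good_span_mod_swap_LL:
  assumes "mon (a @ [L k, L m] @ b) \<in> good_span_mod c d"
    and "mon (a @ [L (m + k)] @ b) \<in> good_span_mod c d"
    and "m + k = 0 \<Longrightarrow> mon (a @ [C] @ b) \<in> good_span_mod c d"
  shows "mon (a @ [L m, L k] @ b) \<in> good_span_mod (c::'a::field) d"
proof -
  have "(\<lambda>w. (1/2 * of_int (cocycle m k)) * mon (a @ [C] @ b) w) \<in> good_span_mod c d"
  proof (cases "m + k = 0")
    case True
    then show ?thesis using assms(3) by (rule_tac good_span_mod.smult) simp
  next
    case False
    then show ?thesis by (simp add: cocycle_def good_span_mod.kernel vacK.zero)
  qed
  moreover have "(\<lambda>w. of_int (m - k) * mon (a @ [L (m + k)] @ b) w) \<in> good_span_mod c d"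
    using assms(2) by (rule good_span_mod.smult)
  ultimately have "(\<lambda>w. mon (a @ [L k, L m] @ b) w + (of_int (m - k) * mon (a @ [L (m + k)] @ b) w +
      (1/2 * of_int (cocycle m k)) * mon (a @ [C] @ b) w)) \<in> good_span_mod c d"
    using assms(1) by (intro good_span_mod.add) assumption+
  then show ?thesis by (rule good_span_mod_by_diff[OF vacK_swap_LL[of a m k b c]])
qed

lemma bad_gen_moves_right:
  assumes shorter: "\<And>v. length v < N \<Longrightarrow> mon v \<in> good_span_mod c (wdeg v)"
    and bad: "\<not> good_gen g" and "good_word b" and "length (a @ g # b) = N"
  shows "mon (a @ g # b) \<in> good_span_mod (c::'a::field) (wdeg (a @ g # b))"
  using assms(3,4)
proof (induction b arbitrary: a)
  case Nil
  show ?case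
  proof (cases g)
    case C
    have "(\<lambda>w. mon (a @ [C]) w - c * mon a w) \<in> vacK c"
      using vacK.central[of a c] by (simp add: tmul_diff_right tmul_smult_right tmul_mon_mon)
    moreover have "(\<lambda>w. c * mon a w) \<in> good_span_mod c (wdeg (a @ [g]))"
      using shorter[of a] Nil.prems C by (simp add: good_span_mod.smult)
    ultimately show ?thesis using C by (simp add: good_span_mod_by_diff)
  next
    case (L m)
    then have "m \<ge> -1" using bad by (simp add: good_gen_def)
    then show ?thesis using L vacK.annih[of m a c] by (simp add: good_span_mod.kernel)
  qed
next
  case (Cons h b)
  then obtain k where h: "h = L k" and b: "good_word b" by (auto simp: good_gen_def)
  have swapped: "mon (a @ [h, g] @ b) \<in> good_span_mod c (wdeg (a @ g # h # b))"
    using Cons.IH[of "a @ [h]"] Cons.prems b by (simp add: algebra_simps)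
  show ?case
  proof (cases g)
    case C
    then show ?thesis
      using vacK_swap_C[of a h b c] swapped h by (simp add: good_span_mod_by_diff)
  next
    case (L m)
    have "mon (a @ [L (m + k)] @ b) \<in> good_span_mod c (wdeg (a @ g # h # b))"
      and "m + k = 0 \<Longrightarrow> mon (a @ [C] @ b) \<in> good_span_mod c (wdeg (a @ g # h # b))"
      using shorter[of "a @ [L (m + k)] @ b"] shorter[of "a @ [C] @ b"] Cons.prems L h
      by (simp_all add: algebra_simps)
    then show ?thesis
      using good_span_mod_swap_LL[of a k m b c] swapped L h by simp
  qed
qed

lemma mon_good_span_mod: "mon w \<in> good_span_mod (c::'a::field) (wdeg w)"
proof (induction "length w" arbitrary: w rule: less_induct)
  case less
  show ?case
  proof (cases "good_word w")
    case True
    then show ?thesis by (simp add: good_span_mod.good)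
  next
    case False
    then obtain a g b where "w = a @ g # b" and "\<not> good_gen g" and "\<forall>z\<in>set b. good_gen z"
      using split_list_last_prop[of w "\<lambda>x. \<not> good_gen x"] by (auto simp: good_word_def)
    then show ?thesis
      using bad_gen_moves_right[of "length w" c g b a] less by (simp add: good_word_def)
  qed
qed

lemma fin_supp_good_span_mod: "x \<in> good_span_mod c d \<Longrightarrow> fin_supp x"
  by (induction rule: good_span_mod.induct) (auto intro: fin_supp_mon fin_supp_vacK fin_supp_add fin_supp_smult)

lemma act1_good_span_mod: "x \<in> good_span_mod c (int n) \<Longrightarrow> 1 \<le> n \<Longrightarrow> act1 n x \<in> vacK c"
proof (induction rule: good_span_mod.induct)
  case (good v)
  then have "1 \<le> length v" by (cases v) auto
  moreover have "(act1w n v :: 'a tens) \<in> good_span (length v) (wdeg v - int n)"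
    by (rule act1w_good_word[OF good.hyps(1)])
  ultimately show ?case
    using good by (simp add: act1_mon good_span_vacK)
next
  case (kernel z)
  then show ?case by (simp add: act1_vacK)
next
  case (add x y)
  then show ?case by (simp add: act1_add fin_supp_good_span_mod vacK.add)
next
  case (smult x a)
  then show ?case by (simp add: act1_smult fin_supp_good_span_mod vacK_smult)
qed

theorem lemma5p6:
  fixes c :: "'a::field" and p :: nat and n :: nat and x :: "'a tens"
  assumes "prime p" and "odd p" and "CHAR('a) = p"
    and "alg_closed_type TYPE('a)"
    and "n \<ge> 1"
    and "homog (int n) x"
  shows "act1 n x \<in> vacK c"
proof -
  have x: "fin_supp x" and deg: "\<And>w. x w \<noteq> 0 \<Longrightarrow> wdeg w = int n"
    using assms(6) by (auto simp: homog_def fin_supp_def)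
  have "mon u \<in> good_span_mod c (int n)" if "x u \<noteq> 0" for u
    using mon_good_span_mod[of u c] deg[OF that] by simp
  then have "(\<lambda>w. \<Sum>u\<in>{w. x w \<noteq> 0}. x u * mon u w) \<in> good_span_mod c (int n)"
    using x by (intro good_span_mod_sum good_span_mod.smult) (auto simp: fin_supp_def)
  then have "x \<in> good_span_mod c (int n)"
    using sum_mon_expansion[OF x] by simp
  then show ?thesis using assms(5) by (rule act1_good_span_mod)
qed

end
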